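(* Let $A\in {\operatorname{\mathsf{TPD}}}_n(\mathbb{S}_{\max}^\vee)$, set $\gamma_i=a_{ii}$ ordered so that $\gamma_1\succeq\cdots\succeq\gamma_n$, let $\gamma=\gamma_k$ and $B=B_k=\gamma_k I\ominus A$. Assume there exists a column $j$ of $B^\mathrm{adj}$ which is in $(\mathbb{S}_{\max}^\vee)^n\setminus \{\mathbf{0}\}$. Then, $j=k$, and any $\mathbb{S}_{\max}$-eigenvector is a multiple of $B^\mathrm{adj}_{:,j}$ and $\gamma$ is a simple (algebraic) $\mathbb{S}_{\max}$-eigenvalue of $A$.
   Context: $\mathbb{S}_{\max}$ is the symmetrized tropical semiring over a divisible totally ordered abelian group, with zero $\mathbf{0}$, unit $\mathbf{1}$, minus $\ominus$; $\mathbb{S}_{\max}^\vee$ is the set of signed elements; $a\,\nabla\, b$ iff $a\ominus b$ is balanced; $a\preceq b$ iff $b=a\oplus b$. $A\in{\operatorname{\mathsf{TPD}}}_n(\mathbb{S}_{\max}^\vee)$: $A$ symmetric with signed entries, $\mathbf{0}<a_{ii}$ and $a_{ij}^2<a_{ii}a_{jj}$ for $i\ne j$ (where $a<b$ iff $b\ominus a$ is positive). Its $\mathbb{S}_{\max}$-eigenvalues are its diagonal entries (simple if occurring once). $(M^{\mathrm{adj}})_{ij}=(\ominus\mathbf{1})^{i+j}\det M[\hat j,\hat i]$ (signed determinant), $M_{:,j}$ the $j$-th column. An $\mathbb{S}_{\max}$-eigenvector associated to $\gamma$ is $v\in(\mathbb{S}_{\max}^\vee)^n\setminus\{\mathbf{0}\}$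 with $Av\,\nabla\,\gamma v$. *)

theory Defs
  imports Main "HOL-Combinatorics.Permutations"
begin

text \<open>The symmetrized tropical semiring S_max over a totally ordered abelian group 'a
  (written additively: the tropical product is the group operation +, the tropical sum is max).\<close>

datatype 'a smax = SZero | SPos 'a | SNeg 'a | SBal 'a

fun smod :: "'a smax \<Rightarrow> 'a" where
  "smod (SPos a) = a" | "smod (SNeg a) = a" | "smod (SBal a) = a" | "smod SZero = undefined"

instantiation smax :: (linordered_ab_group_add) comm_monoid_add
begin
definition zero_smax :: "'a smax" where "zero_smax = SZero"
fun plus_smax :: "'a smax \<Rightarrow> 'a smax \<Rightarrow> 'a smax" where
  "plus_smax SZero y = y"
| "plus_smax x SZero = x"
| "plus_smax x y = (if smod y < smod x then x else if smod x < smod y then y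
                    else if x = y then x else SBal (smod x))"
instance
proof
  fix a b c :: "'a smax"
  show "a + b + c = a + (b + c)"
    by (cases a; cases b; cases c) (auto simp: not_less)
  show "a + b = b + a"
    by (cases a; cases b) auto
  show "0 + a = a" by (simp add: zero_smax_def)
qed
end

instantiation smax :: (linordered_ab_group_add) comm_monoid_mult
begin
definition one_smax :: "'a smax" where "one_smax = SPos 0"
fun times_smax :: "'a smax \<Rightarrow> 'a smax \<Rightarrow> 'a smax" where
  "times_smax SZero y = SZero"
| "times_smax x SZero = SZero"
| "times_smax (SPos a) (SPos b) = SPos (a + b)"
| "times_smax (SPos a) (SNeg b) = SNeg (a + b)"
| "times_smax (SNeg a) (SPos b) = SNeg (a + b)"
| "times_smax (SNeg a) (SNeg b) = SPos (a + b)"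
| "times_smax x y = SBal (smod x + smod y)"
instance
proof
  fix a b c :: "'a smax"
  show "a * b * c = a * (b * c)"
    by (cases a; cases b; cases c) (auto simp: add.assoc)
  show "a * b = b * a"
    by (cases a; cases b) (auto simp: add.commute)
  show "1 * a = a" by (cases a) (simp_all add: one_smax_def)
qed
end

fun sminus :: "'a smax \<Rightarrow> 'a smax" where
  "sminus SZero = SZero" | "sminus (SPos a) = SNeg a" | "sminus (SNeg a) = SPos a"
| "sminus (SBal a) = SBal a"

definition ssub :: "'a::linordered_ab_group_add smax \<Rightarrow> 'a smax \<Rightarrow> 'a smax" where
  "ssub a b = a + sminus b"

definition signed :: "'a smax \<Rightarrow> bool" where
  "signed x \<longleftrightarrow> (\<forall>a. x \<noteq> SBal a)"

definition balanced :: "'a smax \<Rightarrow> bool" where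
  "balanced x \<longleftrightarrow> x = SZero \<or> (\<exists>a. x = SBal a)"

definition spositive :: "'a smax \<Rightarrow> bool" where
  "spositive x \<longleftrightarrow> (\<exists>a. x = SPos a)"

definition sbal :: "'a::linordered_ab_group_add smax \<Rightarrow> 'a smax \<Rightarrow> bool" where
  "sbal a b \<longleftrightarrow> balanced (ssub a b)"

definition sle :: "'a::linordered_ab_group_add smax \<Rightarrow> 'a smax \<Rightarrow> bool" where
  "sle a b \<longleftrightarrow> b = a + b"

definition sless :: "'a::linordered_ab_group_add smax \<Rightarrow> 'a smax \<Rightarrow> bool" where
  "sless a b \<longleftrightarrow> spositive (ssub b a)"

text \<open>n x n matrices are functions nat => nat => 'a smax, indices 0..n-1.\<close>

definition ssign :: "(nat \<Rightarrow> nat) \<Rightarrow> 'a::linordered_ab_group_add smax" where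
  "ssign p = (if evenperm p then 1 else sminus 1)"

definition sdet :: "nat \<Rightarrow> (nat \<Rightarrow> nat \<Rightarrow> 'a::linordered_ab_group_add smax) \<Rightarrow> 'a smax" where
  "sdet n M = (\<Sum>p\<in>{p. p permutes {..<n}}. ssign p * (\<Prod>i<n. M i (p i)))"

definition skip :: "nat \<Rightarrow> nat \<Rightarrow> nat" where
  "skip r i = (if i < r then i else Suc i)"

definition sminor :: "(nat \<Rightarrow> nat \<Rightarrow> 'a) \<Rightarrow> nat \<Rightarrow> nat \<Rightarrow> (nat \<Rightarrow> nat \<Rightarrow> 'a)" where
  "sminor M r c = (\<lambda>i j. M (skip r i) (skip c j))"

definition sadj :: "nat \<Rightarrow> (nat \<Rightarrow> nat \<Rightarrow> 'a::linordered_ab_group_add smax) \<Rightarrow> (nat \<Rightarrow> nat \<Rightarrow> 'a smax)" where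
  "sadj n M = (\<lambda>i j. (sminus 1) ^ (i + j) * sdet (n - 1) (sminor M j i))"

definition smat_vec :: "nat \<Rightarrow> (nat \<Rightarrow> nat \<Rightarrow> 'a::linordered_ab_group_add smax) \<Rightarrow> (nat \<Rightarrow> 'a smax) \<Rightarrow> (nat \<Rightarrow> 'a smax)" where
  "smat_vec n M v = (\<lambda>i. \<Sum>j<n. M i j * v j)"

definition TPD :: "nat \<Rightarrow> (nat \<Rightarrow> nat \<Rightarrow> 'a::linordered_ab_group_add smax) \<Rightarrow> bool" where
  "TPD n A \<longleftrightarrow>
     (\<forall>i<n. \<forall>j<n. A i j = A j i) \<and>
     (\<forall>i<n. \<forall>j<n. signed (A i j)) \<and>
     (\<forall>i<n. sless 0 (A i i)) \<and>
     (\<forall>i<n. \<forall>j<n. i \<noteq> j \<longrightarrow> sless (A i j * A i j) (A i i * A j j))"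

definition seigvec :: "nat \<Rightarrow> (nat \<Rightarrow> nat \<Rightarrow> 'a::linordered_ab_group_add smax) \<Rightarrow> 'a smax \<Rightarrow> (nat \<Rightarrow> 'a smax) \<Rightarrow> bool" where
  "seigvec n A \<gamma> v \<longleftrightarrow>
     (\<forall>i<n. signed (v i)) \<and> (\<exists>i<n. v i \<noteq> 0) \<and>
     (\<forall>i<n. sbal (smat_vec n A v i) (\<gamma> * v i))"

definition scharpoly :: "nat \<Rightarrow> (nat \<Rightarrow> nat \<Rightarrow> 'a::linordered_ab_group_add smax) \<Rightarrow> 'a smax \<Rightarrow> 'a smax" where
  "scharpoly n A x = sdet n (\<lambda>i j. ssub (if i = j then x else 0) (A i j))"

definition simple_alg_eigenvalue :: "nat \<Rightarrow> (nat \<Rightarrow> nat \<Rightarrow> 'a::linordered_ab_group_add smax) \<Rightarrow> 'a smax \<Rightarrow> bool" where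
  "simple_alg_eigenvalue n A \<gamma> \<longleftrightarrow>
     (\<exists>r. (\<forall>i<n. signed (r i)) \<and>
          (\<forall>x. signed x \<longrightarrow> scharpoly n A x = (\<Prod>i<n. ssub x (r i))) \<and>
          card {i. i < n \<and> r i = \<gamma>} = 1)"

end

theory Submission
  imports Defs "HOL-Combinatorics.Orbits"
begin

text \<open>Put B = \<gamma> I \<ominus> A with \<gamma> = a_kk. The condition a_ij^2 < a_ii a_jj of TPD
  survives the passage to B, since subtracting \<gamma> can only enlarge the moduli of the
  positive diagonal entries; summing it along the cycles of a permutation shows that
  in the determinant of B and of its principal minors the identity term strictly
  dominates all others, so these determinants are diagonal products. As
  b_kk = \<gamma> \<ominus> \<gamma> is balanced, the diagonal entry (B^adj)_jj is signed only if j = k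
  and no other b_ii is balanced, i.e. \<gamma> occurs only once on the diagonal; together
  with det(x I \<ominus> A) = \<Prod> (x \<ominus> a_ii) this gives j = k and simplicity.

  For the eigenvectors, u = B^adj_{:,k} satisfies the rows i \<noteq> k of B u = 0 exactly,
  as \<Sum>_{l \<noteq> i} b_il u_l = \<ominus> b_ii u_i: in the expansion of the left-hand side the
  permutations moving i are strictly dominated by permutations fixing i, and these
  pair off with the terms of u_i. A signed solution x of B x \<nabla> 0 with x_k = c u_k
  is then forced to equal c u: following large terms of a row along edges i \<rightarrow> l,
  the potential 2 |z_i| + |b_ii| strictly increases, so a maximal index for it
  cannot be a place where x and c u differ.\<close>

section \<open>Semiring structure of the symmetrized tropical semiring\<close>

instance smax :: (linordered_ab_group_add) comm_semiring_1
proof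
  fix a b c :: "'a smax"
  show "(a + b) * c = a * c + b * c"
    by (cases a; cases b; cases c) (auto simp: not_less)
  show "0 * a = 0" by (simp add: zero_smax_def)
  show "a * 0 = 0" by (cases a) (simp_all add: zero_smax_def)
  show "(0::'a smax) \<noteq> 1" by (simp add: zero_smax_def one_smax_def)
qed

instance smax :: (linordered_ab_group_add) semiring_no_zero_divisors
proof
  fix a b :: "'a smax"
  show "a \<noteq> 0 \<Longrightarrow> b \<noteq> 0 \<Longrightarrow> a * b \<noteq> 0"
    by (cases a; cases b) (auto simp: zero_smax_def)
qed

context
  fixes a b :: "'a::linordered_ab_group_add smax"
begin

lemma smod_mult: "a \<noteq> 0 \<Longrightarrow> b \<noteq> 0 \<Longrightarrow> smod (a * b) = smod a + smod b"
  by (cases a; cases b) (auto simp: zero_smax_def)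

lemma smod_add: "a \<noteq> 0 \<Longrightarrow> b \<noteq> 0 \<Longrightarrow> smod (a + b) = max (smod a) (smod b)"
  by (cases a; cases b) (auto simp: zero_smax_def max_def)

lemma smod_le_smod_add: "a \<noteq> 0 \<Longrightarrow> a + b \<noteq> 0 \<and> smod a \<le> smod (a + b)"
  by (cases a; cases b) (auto simp: zero_smax_def)

lemma sminus_add: "sminus (a + b) = sminus a + sminus b"
  by (cases a; cases b) auto

lemma sminus_mult_left: "sminus (a * b) = sminus a * b"
  by (cases a; cases b) auto

lemma sminus_mult_right: "sminus (a * b) = a * sminus b"
  by (cases a; cases b) auto

lemma sminus_0_iff [simp]: "sminus a = 0 \<longleftrightarrow> a = 0"
  by (cases a) (auto simp: zero_smax_def)

end

lemma sminus_0 [simp]: "sminus (0::'a::linordered_ab_group_add smax) = 0"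
  by (simp add: zero_smax_def)

lemma sminus_sminus [simp]: "sminus (sminus a) = a"
  by (cases a) auto

lemma smod_sminus [simp]: "smod (sminus a) = smod a"
  by (cases a) auto

lemma sminus_sum:
  fixes f :: "'b \<Rightarrow> 'a::linordered_ab_group_add smax"
  shows "sminus (sum f A) = (\<Sum>x\<in>A. sminus (f x))"
  by (induction A rule: infinite_finite_induct) (simp_all add: sminus_add zero_smax_def)

lemma sminus_one_power:
  "(sminus 1 :: 'a::linordered_ab_group_add smax) ^ m = (if even m then 1 else sminus 1)"
  by (induction m) (auto simp: one_smax_def)

lemma smax_prod_eq_0_iff:
  fixes f :: "'b \<Rightarrow> 'a::linordered_ab_group_add smax"
  shows "finite A \<Longrightarrow> prod f A = 0 \<longleftrightarrow> (\<exists>x\<in>A. f x = 0)"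
  by (induction A rule: finite_induct) auto

lemma smod_prod:
  fixes f :: "'b \<Rightarrow> 'a::linordered_ab_group_add smax"
  shows "finite A \<Longrightarrow> (\<forall>x\<in>A. f x \<noteq> 0) \<Longrightarrow> smod (prod f A) = (\<Sum>x\<in>A. smod (f x))"
  by (induction A rule: finite_induct) (auto simp: smod_mult smax_prod_eq_0_iff one_smax_def)

section \<open>Signed elements and absorption\<close>

lemma signed_sminus [simp]: "signed (sminus a) \<longleftrightarrow> signed a"
  by (cases a) (auto simp: signed_def)

lemma balanced_sminus [simp]: "balanced (sminus a) \<longleftrightarrow> balanced a"
  by (cases a) (auto simp: balanced_def)

lemma signed_mult: "signed a \<Longrightarrow> signed b \<Longrightarrow> signed (a * b :: 'a::linordered_ab_group_add smax)"
  by (cases a; cases b) (auto simp: signed_def)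

lemma signed_nonzero_not_balanced: "signed a \<Longrightarrow> a \<noteq> 0 \<Longrightarrow> \<not> balanced a"
  by (cases a) (auto simp: signed_def balanced_def zero_smax_def)

lemma signed_eq_if_balanced_diff:
  fixes a b :: "'a::linordered_ab_group_add smax"
  assumes "signed a" "signed b" "balanced (a + sminus b)"
  shows "a = b"
  using assms by (cases a; cases b) (auto simp: signed_def balanced_def zero_smax_def split: if_splits)

lemma signed_mult_left_cancel:
  fixes b x y :: "'a::linordered_ab_group_add smax"
  assumes "signed b" "b \<noteq> 0" "b * x = b * y"
  shows "x = y"
  using assms by (cases b; cases x; cases y) (auto simp: signed_def zero_smax_def)

lemma signed_invertible:
  fixes u :: "'a::linordered_ab_group_add smax"
  assumes "signed u" "u \<noteq> 0"
  obtains v where "signed v" "v * u = 1"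
proof (cases u)
  case (SPos a)
  then show ?thesis using that[of "SPos (- a)"] by (simp add: signed_def one_smax_def)
next
  case (SNeg a)
  then show ?thesis using that[of "SNeg (- a)"] by (simp add: signed_def one_smax_def)
qed (use assms in \<open>auto simp: signed_def zero_smax_def\<close>)

lemma signed_prod_imp_signed_factors:
  fixes f :: "'b \<Rightarrow> 'a::linordered_ab_group_add smax"
  assumes "finite S" "\<forall>r\<in>S. f r \<noteq> 0" "signed (prod f S)" "q \<in> S"
  shows "signed (f q)"
proof -
  have "prod f S = f q * prod f (S - {q})"
    using assms by (simp add: prod.remove)
  moreover have "prod f (S - {q}) \<noteq> 0"
    using assms by (simp add: smax_prod_eq_0_iff)
  ultimately show ?thesis
    using assms(3) by (cases "f q"; cases "prod f (S - {q})") (auto simp: signed_def zero_smax_def)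
qed

definition smod_less :: "'a::linordered_ab_group_add smax \<Rightarrow> 'a smax \<Rightarrow> bool" where
  "smod_less y x \<longleftrightarrow> y = 0 \<or> (x \<noteq> 0 \<and> smod y < smod x)"

lemma add_smod_less: "smod_less y x \<Longrightarrow> x + y = x"
  unfolding smod_less_def by (cases x; cases y) (auto simp: zero_smax_def)

lemma add_sum_absorbed:
  fixes g :: "'b \<Rightarrow> 'a::comm_monoid_add"
  assumes "finite T" "\<And>t. t \<in> T \<Longrightarrow> s + g t = s"
  shows "s + sum g T = s"
  using assms by (induction T rule: finite_induct) (simp_all add: add.assoc[symmetric])

lemma smod_term_le_smod_sum:
  fixes f :: "'b \<Rightarrow> 'a::linordered_ab_group_add smax"
  assumes "finite A" "x \<in> A" "f x \<noteq> 0"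
  shows "sum f A \<noteq> 0 \<and> smod (f x) \<le> smod (sum f A)"
  using assms smod_le_smod_add[of "f x" "sum f (A - {x})"] by (simp add: sum.remove)

lemma smod_less_sum:
  fixes f :: "'b \<Rightarrow> 'a::linordered_ab_group_add smax"
  assumes "finite A" "x \<in> A" "f x \<noteq> 0" "smod_less y (f x)"
  shows "smod_less y (sum f A)"
  using smod_term_le_smod_sum[of A x f] assms unfolding smod_less_def by auto

lemma smod_sum_attained:
  fixes f :: "'b \<Rightarrow> 'a::linordered_ab_group_add smax"
  assumes "finite A" "sum f A \<noteq> 0"
  shows "\<exists>x\<in>A. f x \<noteq> 0 \<and> smod (f x) = smod (sum f A)"
  using assms
proof (induction A rule: finite_induct)
  case (insert a A)
  show ?case
  proof (cases "f a = 0 \<or> sum f A = 0")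
    case True
    then show ?thesis using insert by auto
  next
    case False
    then show ?thesis
      using insert smod_add[of "f a" "sum f A"] by (auto simp: max_def split: if_splits)
  qed
qed simp

lemma balanced_add_sum_large_term:
  fixes g :: "'b \<Rightarrow> 'a::linordered_ab_group_add smax"
  assumes "finite L" "signed a" "a \<noteq> 0" "balanced (a + sum g L)"
  shows "\<exists>l\<in>L. g l \<noteq> 0 \<and> smod a \<le> smod (g l)"
proof (rule ccontr)
  assume "\<not> ?thesis"
  then have "\<And>l. l \<in> L \<Longrightarrow> a + g l = a"
    using assms(3) by (intro add_smod_less) (auto simp: smod_less_def)
  then have "a + sum g L = a" using add_sum_absorbed[OF assms(1)] by blast
  then show False using assms signed_nonzero_not_balanced by metis
qed

text \<open>A summand of the modulus of s but of a different sign would make the sum balanced.\<close>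

lemma absorbed_add_split:
  fixes s x y :: "'a::linordered_ab_group_add smax"
  assumes "signed s" "s \<noteq> 0" "s + (x + y) = s"
  shows "s + x = s \<and> s + y = s"
  using assms by (cases s; cases x; cases y) (auto simp: signed_def zero_smax_def split: if_splits)

lemma absorbed_sum_terms:
  fixes g :: "'b \<Rightarrow> 'a::linordered_ab_group_add smax"
  assumes "finite L" "signed s" "s \<noteq> 0" "s + sum g L = s"
  shows "\<forall>l\<in>L. s + g l = s"
  using assms
proof (induction L rule: finite_induct)
  case (insert x F)
  then show ?case using absorbed_add_split[of s "g x" "sum g F"] by auto
qed simp

lemma sum_eq_if_dominant_term_kept:
  fixes g h :: "'b \<Rightarrow> 'a::linordered_ab_group_add smax"
  assumes "finite L" "signed s" "s \<noteq> 0" "sum g L = s"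
    and "\<And>l. l \<in> L \<Longrightarrow> h l = g l \<or> smod_less (h l) s"
    and "l0 \<in> L" "h l0 = g l0" "g l0 \<noteq> 0" "smod (g l0) = smod s"
  shows "sum h L = s"
proof -
  have "s + s = s" using assms(2) by (cases s) (auto simp: signed_def)
  then have absorbed: "\<forall>l\<in>L. s + g l = s"
    using absorbed_sum_terms[OF assms(1-3)] assms(4) by simp
  have "h l0 = s"
    using absorbed assms(2,3,6-9)
    by (cases s; cases "g l0") (auto simp: signed_def zero_smax_def split: if_splits)
  have "sum h L = h l0 + sum h (L - {l0})" using assms by (simp add: sum.remove)
  also have "\<dots> = s"
    using add_sum_absorbed[of "L - {l0}" s h] absorbed assms(1,5) add_smod_less \<open>h l0 = s\<close>
    by fastforce
  finally show ?thesis .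
qed

section \<open>Diagonally dominant matrices\<close>

definition diag_dominant :: "nat set \<Rightarrow> (nat \<Rightarrow> nat \<Rightarrow> 'a::linordered_ab_group_add smax) \<Rightarrow> bool" where
  "diag_dominant S M \<longleftrightarrow> (\<forall>r\<in>S. M r r \<noteq> 0) \<and>
     (\<forall>r\<in>S. \<forall>c\<in>S. r \<noteq> c \<longrightarrow> M r c = 0 \<or> smod (M r c) + smod (M r c) < smod (M r r) + smod (M c c))"

lemma diag_dominantD:
  assumes "diag_dominant S M" "r \<in> S" "c \<in> S" "r \<noteq> c" "M r c \<noteq> 0"
  shows "smod (M r c) + smod (M r c) < smod (M r r) + smod (M c c)"
  using assms unfolding diag_dominant_def by blast

lemma diag_dominant_diag_nonzero: "diag_dominant S M \<Longrightarrow> r \<in> S \<Longrightarrow> M r r \<noteq> 0"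
  unfolding diag_dominant_def by blast

lemma diag_dominant_subset: "diag_dominant S M \<Longrightarrow> T \<subseteq> S \<Longrightarrow> diag_dominant T M"
  unfolding diag_dominant_def by blast

lemma ssign_nonzero [simp]: "ssign p \<noteq> (0::'a::linordered_ab_group_add smax)"
  by (simp add: ssign_def one_smax_def zero_smax_def)

lemma smod_ssign [simp]: "smod (ssign p :: 'a::linordered_ab_group_add smax) = 0"
  by (simp add: ssign_def one_smax_def)

lemma ssign_id [simp]: "ssign id = (1::'a::linordered_ab_group_add smax)"
  by (simp add: ssign_def)

lemma less_if_double_less:
  fixes x y :: "'a::linordered_ab_group_add"
  shows "x + x < y + y \<Longrightarrow> x < y"
  by (meson add_mono not_less)

text \<open>Summing the dominance inequality along each cycle of \<rho>: every diagonal
  modulus is counted once as M r r and once as M (\<rho> r) (\<rho> r).\<close>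

lemma sum_smod_perm_less_diag:
  fixes M :: "nat \<Rightarrow> nat \<Rightarrow> 'a::linordered_ab_group_add smax" and \<rho> :: "nat \<Rightarrow> nat"
  assumes fin: "finite S" and inj: "inj_on \<rho> S" and img: "\<rho> ` S \<subseteq> S"
    and dom: "diag_dominant S M" and nz: "\<forall>r\<in>S. M r (\<rho> r) \<noteq> 0"
    and moved: "\<exists>r\<in>S. \<rho> r \<noteq> r"
  shows "(\<Sum>r\<in>S. smod (M r (\<rho> r))) < (\<Sum>r\<in>S. smod (M r r))"
proof -
  have dom': "smod (M r (\<rho> r)) + smod (M r (\<rho> r)) < smod (M r r) + smod (M (\<rho> r) (\<rho> r))"
    if "r \<in> S" "\<rho> r \<noteq> r" for r
  proof -
    have "\<rho> r \<in> S" using img that(1) by blast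
    then show ?thesis by (rule diag_dominantD[OF dom that(1)]) (use that nz in auto)
  qed
  have "\<rho> ` S = S" using endo_inj_surj[OF fin img inj] .
  then have reindex: "(\<Sum>r\<in>S. smod (M (\<rho> r) (\<rho> r))) = (\<Sum>r\<in>S. smod (M r r))"
    using sum.reindex[OF inj, of "\<lambda>r. smod (M r r)"] by simp
  have "(\<Sum>r\<in>S. smod (M r (\<rho> r)) + smod (M r (\<rho> r)))
        < (\<Sum>r\<in>S. smod (M r r) + smod (M (\<rho> r) (\<rho> r)))"
  proof (rule sum_strict_mono_ex1[OF fin])
    show "\<forall>r\<in>S. smod (M r (\<rho> r)) + smod (M r (\<rho> r)) \<le> smod (M r r) + smod (M (\<rho> r) (\<rho> r))"
    proof
      fix r assume "r \<in> S"
      then show "smod (M r (\<rho> r)) + smod (M r (\<rho> r)) \<le> smod (M r r) + smod (M (\<rho> r) (\<rho> r))"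
        using dom'[of r] by (cases "\<rho> r = r") auto
    qed
    show "\<exists>r\<in>S. smod (M r (\<rho> r)) + smod (M r (\<rho> r)) < smod (M r r) + smod (M (\<rho> r) (\<rho> r))"
      using dom' moved by blast
  qed
  then show ?thesis
    using reindex by (intro less_if_double_less[of "\<Sum>r\<in>S. smod (M r (\<rho> r))"]) (simp add: sum.distrib)
qed

lemma perm_term_smod_less_diag:
  fixes M :: "nat \<Rightarrow> nat \<Rightarrow> 'a::linordered_ab_group_add smax"
  assumes dom: "diag_dominant {..<m} M" and p: "p permutes {..<m}" and "p \<noteq> id"
  shows "smod_less (ssign p * (\<Prod>i<m. M i (p i))) (\<Prod>i<m. M i i)"
proof (cases "(\<Prod>i<m. M i (p i)) = 0")
  case False
  then have nz: "\<forall>i<m. M i (p i) \<noteq> 0" by (simp add: smax_prod_eq_0_iff)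
  have diag: "\<forall>i<m. M i i \<noteq> 0" using dom by (simp add: diag_dominant_def)
  have "\<exists>r<m. p r \<noteq> r"
    using \<open>p \<noteq> id\<close> permutes_not_in[OF p] by (metis eq_id_iff lessThan_iff)
  then have "(\<Sum>r<m. smod (M r (p r))) < (\<Sum>r<m. smod (M r r))"
    using nz permutes_inj_on[OF p] permutes_image[OF p]
    by (intro sum_smod_perm_less_diag[OF _ _ _ dom]) auto
  then show ?thesis
    using False nz diag unfolding smod_less_def
    by (simp add: smod_mult smod_prod smax_prod_eq_0_iff)
qed (simp add: smod_less_def)

lemma sdet_diag_dominant:
  fixes M :: "nat \<Rightarrow> nat \<Rightarrow> 'a::linordered_ab_group_add smax"
  assumes dom: "diag_dominant {..<m} M"
  shows "sdet m M = (\<Prod>i<m. M i i)"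
proof -
  let ?P = "{p. p permutes {..<m}}"
  let ?t = "\<lambda>p. ssign p * (\<Prod>i<m. M i (p i))"
  have fin: "finite ?P" by (simp add: finite_permutations)
  have "sdet m M = ?t id + sum ?t (?P - {id})"
    unfolding sdet_def by (rule sum.remove[OF fin]) (simp add: permutes_id)
  also have "\<dots> = (\<Prod>i<m. M i i)"
    by (simp, rule add_sum_absorbed)
      (use fin perm_term_smod_less_diag[OF dom] add_smod_less in auto)
  finally show ?thesis .
qed

lemma skip_lt: "r < m \<Longrightarrow> skip j r < Suc m"
  by (simp add: skip_def)

lemma inj_skip: "inj (skip j)"
  by (auto simp: inj_def skip_def split: if_splits)

lemma skip_image:
  assumes "j \<le> m"
  shows "skip j ` {..<m} = {..<Suc m} - {j}"
proof
  show "skip j ` {..<m} \<subseteq> {..<Suc m} - {j}" by (auto simp: skip_def)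
  show "{..<Suc m} - {j} \<subseteq> skip j ` {..<m}"
  proof
    fix i assume "i \<in> {..<Suc m} - {j}"
    then have "skip j (if i < j then i else i - 1) = i \<and> (if i < j then i else i - 1) < m"
      using assms by (auto simp: skip_def)
    then show "i \<in> skip j ` {..<m}" by (metis imageI lessThan_iff)
  qed
qed

lemma sadj_diag_dominant_diag:
  fixes B :: "nat \<Rightarrow> nat \<Rightarrow> 'a::linordered_ab_group_add smax"
  assumes dom: "diag_dominant {..<n} B" and j: "j < n"
  shows "sadj n B j j = (\<Prod>r\<in>{..<n} - {j}. B r r)"
proof -
  obtain m where n: "n = Suc m" using j by (cases n) auto
  have "diag_dominant (skip j ` {..<m}) B"
    using dom n by (rule_tac diag_dominant_subset) (auto simp: skip_lt)
  then have "diag_dominant {..<m} (sminor B j j)"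
    using inj_skip[of j] unfolding diag_dominant_def sminor_def by (auto simp: inj_eq)
  then have "sdet m (sminor B j j) = (\<Prod>r<m. B (skip j r) (skip j r))"
    by (simp add: sdet_diag_dominant sminor_def)
  also have "\<dots> = (\<Prod>r\<in>skip j ` {..<m}. B r r)"
    by (simp add: prod.reindex inj_on_subset[OF inj_skip])
  also have "\<dots> = (\<Prod>r\<in>{..<n} - {j}. B r r)"
    using j n by (simp add: skip_image)
  finally show ?thesis
    unfolding sadj_def n by (simp add: sminus_one_power)
qed

lemma sadj_diag_dominant_diag_nonzero:
  fixes B :: "nat \<Rightarrow> nat \<Rightarrow> 'a::linordered_ab_group_add smax"
  assumes "diag_dominant {..<n} B" "j < n"
  shows "sadj n B j j \<noteq> 0"
  using assms unfolding sadj_diag_dominant_diag[OF assms] diag_dominant_def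
  by (simp add: smax_prod_eq_0_iff)

lemma signed_sadj_diag_imp_signed_diag:
  fixes B :: "nat \<Rightarrow> nat \<Rightarrow> 'a::linordered_ab_group_add smax"
  assumes "diag_dominant {..<n} B" "j < n" "signed (sadj n B j j)" "i < n" "i \<noteq> j"
  shows "signed (B i i)"
proof -
  have "signed (\<Prod>r\<in>{..<n} - {j}. B r r)"
    using assms(3) unfolding sadj_diag_dominant_diag[OF assms(1,2)] .
  moreover have "\<forall>r\<in>{..<n} - {j}. B r r \<noteq> 0"
    using assms(1) by (simp add: diag_dominant_def)
  ultimately show ?thesis
    using signed_prod_imp_signed_factors[of "{..<n} - {j}" "\<lambda>r. B r r" i] assms(4,5) by blast
qed

section \<open>Adjugate entries as sums over permutations\<close>

text \<open>skip_cycle m j is the cycle (j j+1 \<dots> m): it agrees with skip j below m and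
  sends m to j, so conjugating by two such cycles matches the permutations of the minor
  of B without row k and column l with the permutations of {..<Suc m} sending k to l.\<close>

definition skip_cycle :: "nat \<Rightarrow> nat \<Rightarrow> nat \<Rightarrow> nat" where
  "skip_cycle m j r = (if r < m then skip j r else if r = m then j else r)"

lemma skip_cycle_top [simp]: "skip_cycle m j m = j"
  by (simp add: skip_cycle_def)

lemma skip_cycle_less: "r < m \<Longrightarrow> skip_cycle m j r = skip j r"
  by (simp add: skip_cycle_def)

lemma skip_cycle_step: "j < m \<Longrightarrow> skip_cycle m j = transpose j (Suc j) \<circ> skip_cycle m (Suc j)"
  unfolding skip_cycle_def skip_def transpose_def by (auto simp: fun_eq_iff)

lemma skip_cycle_permutes_evenperm:
  "d \<le> m \<Longrightarrow> skip_cycle m (m - d) permutes {..<Suc m} \<and> evenperm (skip_cycle m (m - d)) = even d"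
proof (induction d)
  case 0
  have "skip_cycle m m = id" unfolding skip_cycle_def skip_def by auto
  then show ?case by (metis permutes_id evenperm_id even_zero diff_zero)
next
  case (Suc d)
  let ?j = "m - Suc d"
  have j: "?j < m" "Suc ?j = m - d" using Suc.prems by auto
  have IH: "skip_cycle m (m - d) permutes {..<Suc m}" "evenperm (skip_cycle m (m - d)) = even d"
    using Suc by auto
  have eq: "skip_cycle m ?j = transpose ?j (Suc ?j) \<circ> skip_cycle m (m - d)"
    using skip_cycle_step[OF j(1)] j(2) by simp
  have pt: "transpose ?j (Suc ?j) permutes {..<Suc m}"
    by (rule permutes_swap_id) (use j in auto)
  have "evenperm (skip_cycle m ?j) = (evenperm (transpose ?j (Suc ?j)) = even d)"
    unfolding eq IH(2)[symmetric]
    by (rule evenperm_comp) (use pt IH(1) permutation_permutes in blast)+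
  moreover have "skip_cycle m ?j permutes {..<Suc m}"
    unfolding eq by (rule permutes_compose[OF IH(1) pt])
  ultimately show ?case by (simp add: evenperm_swap)
qed

lemma skip_cycle_permutes: "j \<le> m \<Longrightarrow> skip_cycle m j permutes {..<Suc m}"
  using skip_cycle_permutes_evenperm[of "m - j" m] by simp

lemma evenperm_skip_cycle: "j \<le> m \<Longrightarrow> evenperm (skip_cycle m j) = even (m - j)"
  using skip_cycle_permutes_evenperm[of "m - j" m] by simp

lemma skip_cycle_image: "j \<le> m \<Longrightarrow> skip_cycle m j ` {..<m} = {..<Suc m} - {j}"
  using skip_image[of j m] by (simp add: skip_cycle_less)

lemma ssign_conj_skip_cycles:
  fixes \<sigma> :: "nat \<Rightarrow> nat"
  assumes p: "\<sigma> permutes {..<m}" and "k \<le> m" "l \<le> m"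
  shows "ssign (skip_cycle m l \<circ> \<sigma> \<circ> inv (skip_cycle m k)) =
    (sminus 1) ^ (l + k) * (ssign \<sigma> :: 'a::linordered_ab_group_add smax)"
proof -
  let ?ck = "skip_cycle m k" and ?cl = "skip_cycle m l"
  have perm: "permutation ?cl" "permutation \<sigma>" "permutation (inv ?ck)" "permutation ?ck"
    using assms skip_cycle_permutes permutes_inv permutation_permutes by (metis finite_lessThan)+
  have "evenperm (?cl \<circ> \<sigma> \<circ> inv ?ck) = (evenperm ?cl = evenperm (\<sigma> \<circ> inv ?ck))"
    unfolding o_assoc[symmetric] by (rule evenperm_comp) (use perm permutation_compose in auto)
  also have "evenperm (\<sigma> \<circ> inv ?ck) = (evenperm \<sigma> = evenperm ?ck)"
    using evenperm_comp[OF perm(2,3)] evenperm_inv[OF perm(4)] by simp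
  finally have "evenperm (?cl \<circ> \<sigma> \<circ> inv ?ck) = (evenperm ?cl = (evenperm \<sigma> = evenperm ?ck))" .
  then have "evenperm (?cl \<circ> \<sigma> \<circ> inv ?ck) = (even (m - l) = (evenperm \<sigma> = even (m - k)))"
    by (simp only: evenperm_skip_cycle assms(2,3))
  moreover have "even (l + k) = (even (m - l) = even (m - k))" using assms by presburger
  moreover have "sminus 1 * sminus (1::'a smax) = 1" by (simp add: one_smax_def)
  ultimately show ?thesis
    by (cases "even (l + k)") (auto simp: ssign_def sminus_one_power)
qed

lemma prod_conj_skip_cycles:
  fixes \<sigma> :: "nat \<Rightarrow> nat"
  assumes p: "\<sigma> permutes {..<m}" and k: "k \<le> m" and l: "l \<le> m"
  shows "(\<Prod>r\<in>{..<Suc m} - {k}. B r ((skip_cycle m l \<circ> \<sigma> \<circ> inv (skip_cycle m k)) r)) =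
    (\<Prod>r<m. B (skip k r) (skip l (\<sigma> r)))"
proof -
  let ?ck = "skip_cycle m k" and ?\<Phi> = "skip_cycle m l \<circ> \<sigma> \<circ> inv (skip_cycle m k)"
  have pk: "?ck permutes {..<Suc m}" using k by (rule skip_cycle_permutes)
  have "(\<Prod>r\<in>{..<Suc m} - {k}. B r (?\<Phi> r)) = (\<Prod>r\<in>?ck ` {..<m}. B r (?\<Phi> r))"
    using skip_cycle_image[OF k] by simp
  also have "\<dots> = (\<Prod>r<m. B (?ck r) (?\<Phi> (?ck r)))"
    by (rule prod.reindex[unfolded comp_def]) (rule inj_on_subset[OF permutes_inj[OF pk]], simp)
  also have "\<dots> = (\<Prod>r<m. B (skip k r) (skip l (\<sigma> r)))"
  proof (rule prod.cong[OF refl])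
    fix r assume r: "r \<in> {..<m}"
    then have "\<sigma> r < m" using permutes_in_image[OF p] by simp
    then show "B (?ck r) (?\<Phi> (?ck r)) = B (skip k r) (skip l (\<sigma> r))"
      using r permutes_inverses(2)[OF pk, of r] by (simp add: skip_cycle_less)
  qed
  finally show ?thesis .
qed

definition perm_cofactor :: "nat \<Rightarrow> (nat \<Rightarrow> nat \<Rightarrow> 'a::linordered_ab_group_add smax) \<Rightarrow> nat \<Rightarrow> nat \<Rightarrow> 'a smax" where
  "perm_cofactor n B k l =
     (\<Sum>\<pi>\<in>{\<pi>. \<pi> permutes {..<n} \<and> \<pi> k = l}. ssign \<pi> * (\<Prod>r\<in>{..<n} - {k}. B r (\<pi> r)))"

lemma sadj_eq_perm_cofactor:
  fixes B :: "nat \<Rightarrow> nat \<Rightarrow> 'a::linordered_ab_group_add smax"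
  assumes k: "k < Suc m" and l: "l < Suc m"
  shows "sadj (Suc m) B l k = perm_cofactor (Suc m) B k l"
proof -
  let ?ck = "skip_cycle m k" and ?cl = "skip_cycle m l"
  have pk: "?ck permutes {..<Suc m}" and pl: "?cl permutes {..<Suc m}"
    using k l by (simp_all add: skip_cycle_permutes)
  define \<Phi> where "\<Phi> \<sigma> = ?cl \<circ> \<sigma> \<circ> inv ?ck" for \<sigma> :: "nat \<Rightarrow> nat"
  define \<Psi> where "\<Psi> \<pi> = inv ?cl \<circ> \<pi> \<circ> ?ck" for \<pi> :: "nat \<Rightarrow> nat"
  have "sadj (Suc m) B l k =
     (\<Sum>\<sigma>\<in>{\<sigma>. \<sigma> permutes {..<m}}. (sminus 1) ^ (l + k) * (ssign \<sigma> * (\<Prod>r<m. B (skip k r) (skip l (\<sigma> r)))))"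
    unfolding sadj_def sdet_def sminor_def by (simp add: sum_distrib_left)
  also have "\<dots> = perm_cofactor (Suc m) B k l"
    unfolding perm_cofactor_def
  proof (rule sum.reindex_bij_witness[where i = \<Psi> and j = \<Phi>])
    fix \<sigma> assume "\<sigma> \<in> {\<sigma>. \<sigma> permutes {..<m}}"
    then have ps: "\<sigma> permutes {..<m}" by simp
    show "\<Psi> (\<Phi> \<sigma>) = \<sigma>"
      unfolding \<Phi>_def \<Psi>_def using permutes_inverses[OF pl] permutes_inverses[OF pk]
      by (simp add: fun_eq_iff)
    have ps': "\<sigma> permutes {..<Suc m}" by (rule permutes_subset[OF ps]) auto
    have "inv ?ck k = m" using permutes_inverses(2)[OF pk, of m] by simp
    then have "\<Phi> \<sigma> k = l" using permutes_not_in[OF ps, of m] by (simp add: \<Phi>_def)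
    moreover have "\<Phi> \<sigma> permutes {..<Suc m}"
      unfolding \<Phi>_def by (intro permutes_compose permutes_inv pk pl ps')
    ultimately show "\<Phi> \<sigma> \<in> {\<pi>. \<pi> permutes {..<Suc m} \<and> \<pi> k = l}" by simp
    show "ssign (\<Phi> \<sigma>) * (\<Prod>r\<in>{..<Suc m} - {k}. B r (\<Phi> \<sigma> r)) =
          (sminus 1) ^ (l + k) * (ssign \<sigma> * (\<Prod>r<m. B (skip k r) (skip l (\<sigma> r))))"
      using ssign_conj_skip_cycles[OF ps, where 'a = 'a] prod_conj_skip_cycles[OF ps, of k l B] k l
      by (simp add: \<Phi>_def mult.assoc)
  next
    fix \<pi> assume "\<pi> \<in> {\<pi>. \<pi> permutes {..<Suc m} \<and> \<pi> k = l}"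
    then have pp: "\<pi> permutes {..<Suc m}" and pkl: "\<pi> k = l" by auto
    show "\<Phi> (\<Psi> \<pi>) = \<pi>"
      unfolding \<Phi>_def \<Psi>_def using permutes_inverses[OF pl] permutes_inverses[OF pk]
      by (simp add: fun_eq_iff)
    have "\<Psi> \<pi> permutes {..<Suc m}"
      unfolding \<Psi>_def by (intro permutes_compose permutes_inv pk pl pp)
    moreover have "\<Psi> \<pi> m = m"
      using permutes_inverses(2)[OF pl, of m] pkl by (simp add: \<Psi>_def)
    ultimately have "\<Psi> \<pi> permutes {..<m}"
      by (metis permutes_superset Diff_iff lessThan_iff less_SucE)
    then show "\<Psi> \<pi> \<in> {\<sigma>. \<sigma> permutes {..<m}}" by simp
  qed
  finally show ?thesis .
qed

section \<open>The adjugate column solves the rows i \<noteq> k exactly\<close>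

text \<open>Composing \<pi> with (i k) cuts off the arc of the \<pi>-cycle from \<pi> k to i as a
  cycle of its own.\<close>

lemma orbit_arc_invariant:
  fixes \<pi> :: "'a \<Rightarrow> 'a"
  assumes orb: "i \<in> orbit \<pi> k" and ik: "i \<noteq> k"
  obtains S where "S \<subseteq> orbit \<pi> k" "i \<in> S" "k \<notin> S" "(\<pi> \<circ> transpose i k) ` S \<subseteq> S"
proof -
  define t0 where "t0 = funpow_dist1 \<pi> k i"
  define S where "S = (\<lambda>t. (\<pi> ^^ t) k) ` {1..t0}"
  have t0: "(\<pi> ^^ t0) k = i" "1 \<le> t0"
    using funpow_dist1_prop[OF orb] by (simp_all add: t0_def)
  have not_i: "(\<pi> ^^ t) k \<noteq> i" if "0 < t" "t < t0" for t
    using funpow_dist1_least that by (simp add: t0_def)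
  have not_k: "(\<pi> ^^ t) k \<noteq> k" if "1 \<le> t" "t \<le> t0" for t
  proof (cases "t = t0")
    case False
    then show ?thesis
      using funpow_neq_less_funpow_dist1[OF orb, of t 0] that by (simp add: t0_def)
  qed (use t0 ik in simp)
  show ?thesis
  proof (rule that[of S])
    show "(\<pi> \<circ> transpose i k) ` S \<subseteq> S"
    proof (rule image_subsetI)
      fix y assume "y \<in> S"
      then obtain t where t: "1 \<le> t" "t \<le> t0" "y = (\<pi> ^^ t) k" by (auto simp: S_def)
      show "(\<pi> \<circ> transpose i k) y \<in> S"
      proof (cases "t = t0")
        case True
        then have "(\<pi> \<circ> transpose i k) y = (\<pi> ^^ 1) k" using t t0 by simp
        then show ?thesis using t0 unfolding S_def by (metis atLeastAtMost_iff image_eqI order_refl)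
      next
        case False
        then have "(\<pi> \<circ> transpose i k) y = (\<pi> ^^ Suc t) k"
          using t not_i not_k by (simp add: transpose_def)
        then show ?thesis
          unfolding S_def by (rule image_eqI) (use t False in auto)
      qed
    qed
    show "S \<subseteq> orbit \<pi> k" by (auto simp: S_def orbit_altdef)
    show "i \<in> S" using t0 unfolding S_def by force
    show "k \<notin> S" using not_k unfolding S_def by force
  qed
qed

lemma invariant_set_separating:
  fixes \<pi> :: "nat \<Rightarrow> nat"
  assumes p: "\<pi> permutes {..<n}" and i: "i < n" and k: "k < n" and ik: "i \<noteq> k"
  obtains \<rho> S where "\<rho> = \<pi> \<or> \<rho> = \<pi> \<circ> transpose i k" "S \<subseteq> {..<n}" "i \<in> S" "k \<notin> S" "\<rho> ` S \<subseteq> S"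
proof -
  have perm: "permutation \<pi>" using p finite_lessThan permutation_permutes by metis
  show ?thesis
  proof (cases "k \<in> orbit \<pi> i")
    case False
    show ?thesis
    proof (rule that[of \<pi> "orbit \<pi> i"])
      show "\<pi> ` orbit \<pi> i \<subseteq> orbit \<pi> i" by (auto intro: orbit.step)
      show "i \<in> orbit \<pi> i" using perm by (rule permutation_self_in_orbit)
    qed (use False permutes_orbit_subset[OF p] i in simp_all)
  next
    case True
    then have "i \<in> orbit \<pi> k"
      by (rule orbit_swap[OF permutation_self_in_orbit[OF perm]])
    then obtain S where "S \<subseteq> orbit \<pi> k" "i \<in> S" "k \<notin> S" "(\<pi> \<circ> transpose i k) ` S \<subseteq> S"
      using ik by (rule orbit_arc_invariant)
    then show ?thesis
      using that[of "\<pi> \<circ> transpose i k" S] permutes_orbit_subset[OF p, of k] k by auto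
  qed
qed

lemma permutes_fix_invariant_subset:
  fixes \<rho> :: "'a \<Rightarrow> 'a"
  assumes p: "\<rho> permutes U" and S: "S \<subseteq> U" "finite S" and img: "\<rho> ` S \<subseteq> S"
  shows "(\<lambda>x. if x \<in> S then x else \<rho> x) permutes U"
proof (rule bij_imp_permutes)
  have inj: "inj \<rho>" using permutes_inj[OF p] .
  then have "\<rho> ` S = S" using endo_inj_surj[OF S(2) img] inj_on_subset by blast
  then have "\<rho> ` (U - S) = U - S"
    using permutes_image[OF p] inj by (simp add: image_set_diff)
  then have "bij_betw \<rho> (U - S) (U - S)"
    using inj_on_subset[OF inj] by (simp add: bij_betw_def)
  then have "bij_betw (\<lambda>x. if x \<in> S then x else \<rho> x) (S \<union> (U - S)) (S \<union> (U - S))"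
    by (intro bij_betw_disjoint_Un[OF bij_betw_id[unfolded id_def]]) auto
  moreover have "S \<union> (U - S) = U" using S(1) by blast
  ultimately show "bij_betw (\<lambda>x. if x \<in> S then x else \<rho> x) U U" by metis
next
  show "x \<notin> U \<Longrightarrow> (if x \<in> S then x else \<rho> x) = x" for x
    using S(1) permutes_not_in[OF p] by auto
qed

text \<open>The term of \<pi> in the determinant of B with row k replaced by row i.\<close>

definition dup_row_term :: "nat \<Rightarrow> (nat \<Rightarrow> nat \<Rightarrow> 'a::linordered_ab_group_add smax) \<Rightarrow> nat \<Rightarrow> nat \<Rightarrow> (nat \<Rightarrow> nat) \<Rightarrow> 'a smax" where
  "dup_row_term n B i k \<pi> = B i (\<pi> k) * (\<Prod>r\<in>{..<n} - {k}. B r (\<pi> r))"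

lemma dup_row_term_transpose:
  assumes "i < n" "k < n" "i \<noteq> k"
  shows "dup_row_term n B i k (\<pi> \<circ> transpose i k) = dup_row_term n B i k \<pi>"
proof -
  have split: "(\<Prod>r\<in>{..<n} - {k}. B r (\<sigma> r)) = B i (\<sigma> i) * (\<Prod>r\<in>{..<n} - {k} - {i}. B r (\<sigma> r))"
    for \<sigma> :: "nat \<Rightarrow> nat"
    by (rule prod.remove) (use assms in auto)
  have "(\<Prod>r\<in>{..<n} - {k} - {i}. B r ((\<pi> \<circ> transpose i k) r)) = (\<Prod>r\<in>{..<n} - {k} - {i}. B r (\<pi> r))"
    by (rule prod.cong) auto
  then show ?thesis
    unfolding dup_row_term_def split by (simp add: mult.left_commute)
qed

lemma ssign_comp_transpose:
  assumes p: "\<theta> permutes {..<n}" and "a < n" "b < n" "a \<noteq> b"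
  shows "ssign (\<theta> \<circ> transpose a b) = sminus (ssign \<theta> :: 'a::linordered_ab_group_add smax)"
proof -
  have "transpose a b permutes {..<n}" by (rule permutes_swap_id) (use assms in auto)
  then have "evenperm (\<theta> \<circ> transpose a b) = (evenperm \<theta> = evenperm (transpose a b))"
    using p by (intro evenperm_comp) (auto simp: permutation_permutes)
  then show ?thesis using assms by (simp add: ssign_def evenperm_swap)
qed

text \<open>Replacing \<rho> by the identity on an invariant set S leaves the factors outside S
  untouched and, by dominance, strictly increases the product over S.\<close>

lemma dup_row_term_fix_invariant_set:
  fixes B :: "nat \<Rightarrow> nat \<Rightarrow> 'a::linordered_ab_group_add smax"
  assumes dom: "diag_dominant {..<n} B" and pr: "\<rho> permutes {..<n}"
    and S: "S \<subseteq> {..<n}" "k \<notin> S" and img: "\<rho> ` S \<subseteq> S" and moved: "\<exists>r\<in>S. \<rho> r \<noteq> r"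
    and nz: "dup_row_term n B i k \<rho> \<noteq> 0"
  defines "\<rho>' \<equiv> \<lambda>x. if x \<in> S then x else \<rho> x"
  shows "dup_row_term n B i k \<rho>' \<noteq> 0 \<and> smod (dup_row_term n B i k \<rho>) < smod (dup_row_term n B i k \<rho>')"
proof -
  let ?R = "{..<n} - {k}"
  have finS: "finite S" using S(1) finite_subset by blast
  have split: "(\<Prod>r\<in>?R. f r) = (\<Prod>r\<in>?R - S. f r) * (\<Prod>r\<in>S. f r)" for f :: "nat \<Rightarrow> 'a smax"
    by (rule prod.subset_diff) (use S in auto)
  have outside: "(\<Prod>r\<in>?R - S. B r (\<rho>' r)) = (\<Prod>r\<in>?R - S. B r (\<rho> r))"
    by (rule prod.cong) (auto simp: \<rho>'_def)
  have inside: "(\<Prod>r\<in>S. B r (\<rho>' r)) = (\<Prod>r\<in>S. B r r)"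
    by (rule prod.cong) (auto simp: \<rho>'_def)
  have t\<rho>: "dup_row_term n B i k \<rho> = B i (\<rho> k) * ((\<Prod>r\<in>?R - S. B r (\<rho> r)) * (\<Prod>r\<in>S. B r (\<rho> r)))"
    unfolding dup_row_term_def split ..
  have t\<rho>': "dup_row_term n B i k \<rho>' = B i (\<rho> k) * ((\<Prod>r\<in>?R - S. B r (\<rho> r)) * (\<Prod>r\<in>S. B r r))"
    unfolding dup_row_term_def split outside inside using S(2) by (simp add: \<rho>'_def)
  have nz\<rho>: "B i (\<rho> k) \<noteq> 0" "(\<Prod>r\<in>?R - S. B r (\<rho> r)) \<noteq> 0" "\<forall>r\<in>S. B r (\<rho> r) \<noteq> 0"
    using nz finS unfolding t\<rho> by (auto simp: smax_prod_eq_0_iff)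
  have diag: "\<forall>r\<in>S. B r r \<noteq> 0" using dom S(1) diag_dominant_diag_nonzero by blast
  have "(\<Sum>r\<in>S. smod (B r (\<rho> r))) < (\<Sum>r\<in>S. smod (B r r))"
  proof (rule sum_smod_perm_less_diag[where M = B and \<rho> = \<rho>])
    show "inj_on \<rho> S" by (rule inj_on_subset[OF permutes_inj[OF pr] subset_UNIV])
    show "diag_dominant S B" using dom S(1) by (rule diag_dominant_subset)
  qed (use finS img nz\<rho>(3) moved in auto)
  then show ?thesis
    unfolding t\<rho> t\<rho>' using nz\<rho> diag finS
    by (simp add: smod_mult smod_prod smax_prod_eq_0_iff)
qed

lemma dup_row_term_dominated:
  fixes B :: "nat \<Rightarrow> nat \<Rightarrow> 'a::linordered_ab_group_add smax"
  assumes dom: "diag_dominant {..<n} B" and i: "i < n" "k < n" "i \<noteq> k"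
    and p: "\<pi> permutes {..<n}" and "\<pi> k \<noteq> i" "\<pi> i \<noteq> i"
    and nz: "dup_row_term n B i k \<pi> \<noteq> 0"
  obtains \<pi>' where "\<pi>' permutes {..<n}" "\<pi>' i = i" "\<pi>' k \<noteq> i" "dup_row_term n B i k \<pi>' \<noteq> 0"
    "smod (dup_row_term n B i k \<pi>) < smod (dup_row_term n B i k \<pi>')"
proof -
  obtain \<rho> S where \<rho>: "\<rho> = \<pi> \<or> \<rho> = \<pi> \<circ> transpose i k"
    and S: "S \<subseteq> {..<n}" "i \<in> S" "k \<notin> S" and img: "\<rho> ` S \<subseteq> S"
    using invariant_set_separating[OF p i] .
  have pt: "transpose i k permutes {..<n}" by (rule permutes_swap_id) (use i in auto)
  have pr: "\<rho> permutes {..<n}" using \<rho> permutes_compose[OF pt p] p by auto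
  have same: "dup_row_term n B i k \<rho> = dup_row_term n B i k \<pi>"
    using \<rho> dup_row_term_transpose[OF i] by auto
  have "\<rho> i \<noteq> i \<and> \<rho> k \<noteq> i"
    using \<rho>
  proof
    assume "\<rho> = \<pi> \<circ> transpose i k"
    then show ?thesis using assms(6,7) by simp
  qed (use assms(6,7) in simp)
  then have moved: "\<rho> i \<noteq> i" "\<rho> k \<noteq> i" by auto
  define \<pi>' where "\<pi>' = (\<lambda>x. if x \<in> S then x else \<rho> x)"
  have "\<pi>' permutes {..<n}"
    unfolding \<pi>'_def by (rule permutes_fix_invariant_subset[OF pr S(1) _ img]) (use S finite_subset in blast)
  moreover have "\<pi>' i = i" "\<pi>' k \<noteq> i" using S moved unfolding \<pi>'_def by auto
  moreover have "dup_row_term n B i k \<pi>' \<noteq> 0 \<and> smod (dup_row_term n B i k \<rho>) < smod (dup_row_term n B i k \<pi>')"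
    unfolding \<pi>'_def using S moved(1) nz same
    by (intro dup_row_term_fix_invariant_set[OF dom pr S(1,3) img]) auto
  ultimately show ?thesis using that same by auto
qed

lemma permutes_less: "\<pi> permutes {..<n} \<Longrightarrow> x < (n::nat) \<Longrightarrow> \<pi> x < n"
  using permutes_in_image[of \<pi> "{..<n}" x] by simp

lemma sum_row_times_perm_cofactor:
  fixes B :: "nat \<Rightarrow> nat \<Rightarrow> 'a::linordered_ab_group_add smax"
  assumes "i < n" "k < n"
  shows "(\<Sum>l\<in>{..<n} - {i}. B i l * perm_cofactor n B k l) =
    (\<Sum>\<pi>\<in>{\<pi>. \<pi> permutes {..<n} \<and> \<pi> k \<noteq> i}. ssign \<pi> * dup_row_term n B i k \<pi>)"
proof -
  let ?P = "{\<pi>. \<pi> permutes {..<n} \<and> \<pi> k \<noteq> i}"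
  have "B i l * perm_cofactor n B k l = (\<Sum>\<pi>\<in>{\<pi>\<in>?P. \<pi> k = l}. ssign \<pi> * dup_row_term n B i k \<pi>)"
    if "l \<in> {..<n} - {i}" for l
  proof -
    have "{\<pi>. \<pi> permutes {..<n} \<and> \<pi> k = l} = {\<pi>\<in>?P. \<pi> k = l}" using that by auto
    then show ?thesis
      unfolding perm_cofactor_def dup_row_term_def
      by (auto simp: sum_distrib_left mult.left_commute intro!: sum.cong)
  qed
  then have "(\<Sum>l\<in>{..<n} - {i}. B i l * perm_cofactor n B k l) =
      (\<Sum>l\<in>{..<n} - {i}. \<Sum>\<pi>\<in>{\<pi>\<in>?P. \<pi> k = l}. ssign \<pi> * dup_row_term n B i k \<pi>)"
    by (rule sum.cong[OF refl])
  also have "\<dots> = (\<Sum>\<pi>\<in>?P. ssign \<pi> * dup_row_term n B i k \<pi>)"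
    by (rule sum.group) (use assms in \<open>auto simp: finite_permutations intro: permutes_less\<close>)
  finally show ?thesis .
qed

text \<open>Composing with the transposition (i k) matches the permutations fixing i
  with those sending k to i, at the cost of a sign.\<close>

lemma sum_dup_row_terms_fixing_row:
  fixes B :: "nat \<Rightarrow> nat \<Rightarrow> 'a::linordered_ab_group_add smax"
  assumes i: "i < n" "k < n" "i \<noteq> k"
  shows "(\<Sum>\<pi>\<in>{\<pi>. \<pi> permutes {..<n} \<and> \<pi> k \<noteq> i \<and> \<pi> i = i}. ssign \<pi> * dup_row_term n B i k \<pi>) =
    sminus (B i i * perm_cofactor n B k i)"
proof -
  let ?T = "{\<theta>. \<theta> permutes {..<n} \<and> \<theta> k = i}"
  let ?\<tau> = "transpose i k"
  have pt: "?\<tau> permutes {..<n}" by (rule permutes_swap_id) (use i in auto)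
  have inv: "(f \<circ> ?\<tau>) \<circ> ?\<tau> = f" for f :: "nat \<Rightarrow> nat" by (auto simp: fun_eq_iff)
  have "sminus (B i i * perm_cofactor n B k i) =
      (\<Sum>\<theta>\<in>?T. sminus (B i i * (ssign \<theta> * (\<Prod>r\<in>{..<n} - {k}. B r (\<theta> r)))))"
    unfolding perm_cofactor_def by (simp add: sum_distrib_left sminus_sum)
  also have "\<dots> = (\<Sum>\<pi>\<in>{\<pi>. \<pi> permutes {..<n} \<and> \<pi> k \<noteq> i \<and> \<pi> i = i}. ssign \<pi> * dup_row_term n B i k \<pi>)"
  proof (rule sum.reindex_bij_witness[where i = "\<lambda>\<pi>. \<pi> \<circ> ?\<tau>" and j = "\<lambda>\<theta>. \<theta> \<circ> ?\<tau>"])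
    fix \<theta> assume "\<theta> \<in> ?T"
    then have p: "\<theta> permutes {..<n}" and \<theta>k: "\<theta> k = i" by auto
    show "\<theta> \<circ> ?\<tau> \<circ> ?\<tau> = \<theta>" by (rule inv)
    have "\<theta> i \<noteq> \<theta> k" using permutes_inj[OF p] i(3) by (auto simp: inj_def)
    then show "\<theta> \<circ> ?\<tau> \<in> {\<pi>. \<pi> permutes {..<n} \<and> \<pi> k \<noteq> i \<and> \<pi> i = i}"
      using permutes_compose[OF pt p] \<theta>k by auto
    have transposed: "dup_row_term n B i k (\<theta> \<circ> ?\<tau>) = B i i * (\<Prod>r\<in>{..<n} - {k}. B r (\<theta> r))"
      using dup_row_term_transpose[OF i, of B \<theta>] \<theta>k unfolding dup_row_term_def by simp
    have sign: "ssign (\<theta> \<circ> ?\<tau>) = (sminus (ssign \<theta>) :: 'a smax)"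
      by (rule ssign_comp_transpose[OF p i])
    show "ssign (\<theta> \<circ> ?\<tau>) * dup_row_term n B i k (\<theta> \<circ> ?\<tau>) =
        sminus (B i i * (ssign \<theta> * (\<Prod>r\<in>{..<n} - {k}. B r (\<theta> r))))"
      unfolding transposed sign by (simp add: sminus_mult_left sminus_mult_right mult.left_commute)
  next
    fix \<pi> assume "\<pi> \<in> {\<pi>. \<pi> permutes {..<n} \<and> \<pi> k \<noteq> i \<and> \<pi> i = i}"
    then have p: "\<pi> permutes {..<n}" and "\<pi> i = i" by auto
    show "\<pi> \<circ> ?\<tau> \<circ> ?\<tau> = \<pi>" by (rule inv)
    show "\<pi> \<circ> ?\<tau> \<in> ?T" using permutes_compose[OF pt p] \<open>\<pi> i = i\<close> by auto
  qed
  finally show ?thesis ..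
qed

text \<open>The terms of permutations moving i are absorbed by those fixing i.\<close>

lemma perm_cofactor_row_identity:
  fixes B :: "nat \<Rightarrow> nat \<Rightarrow> 'a::linordered_ab_group_add smax"
  assumes dom: "diag_dominant {..<n} B" and i: "i < n" "k < n" "i \<noteq> k"
  shows "(\<Sum>l\<in>{..<n} - {i}. B i l * perm_cofactor n B k l) = sminus (B i i * perm_cofactor n B k i)"
proof -
  let ?Fix = "{\<pi>. \<pi> permutes {..<n} \<and> \<pi> k \<noteq> i \<and> \<pi> i = i}"
  let ?Move = "{\<pi>. \<pi> permutes {..<n} \<and> \<pi> k \<noteq> i \<and> \<pi> i \<noteq> i}"
  define F where "F = (\<lambda>\<pi>. ssign \<pi> * dup_row_term n B i k \<pi>)"
  have fin: "finite ?Fix" "finite ?Move"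
    by (rule finite_subset[OF _ finite_permutations[of "{..<n}"]], auto)+
  have "{\<pi>. \<pi> permutes {..<n} \<and> \<pi> k \<noteq> i} = ?Fix \<union> ?Move" by auto
  then have "(\<Sum>l\<in>{..<n} - {i}. B i l * perm_cofactor n B k l) = sum F ?Fix + sum F ?Move"
    unfolding sum_row_times_perm_cofactor[OF i(1,2)] F_def
    by (simp add: sum.union_disjoint[OF fin] disjoint_iff)
  also have "\<dots> = sum F ?Fix"
  proof (rule add_sum_absorbed[OF fin(2)], rule add_smod_less)
    fix \<pi> assume "\<pi> \<in> ?Move"
    then have p: "\<pi> permutes {..<n}" and "\<pi> k \<noteq> i" "\<pi> i \<noteq> i" by auto
    show "smod_less (F \<pi>) (sum F ?Fix)"
    proof (cases "dup_row_term n B i k \<pi> = 0")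
      case False
      obtain \<pi>' where \<pi>': "\<pi>' \<in> ?Fix" "dup_row_term n B i k \<pi>' \<noteq> 0"
        "smod (dup_row_term n B i k \<pi>) < smod (dup_row_term n B i k \<pi>')"
        using dup_row_term_dominated[OF dom i p \<open>\<pi> k \<noteq> i\<close> \<open>\<pi> i \<noteq> i\<close> False] by auto
      have "F \<pi>' \<noteq> 0" using \<pi>'(2) by (simp add: F_def)
      moreover have "smod_less (F \<pi>) (F \<pi>')"
        unfolding smod_less_def F_def using \<pi>'(2,3) False by (simp add: smod_mult)
      ultimately show ?thesis by (rule smod_less_sum[OF fin(1) \<pi>'(1)])
    qed (simp add: smod_less_def F_def)
  qed
  also have "\<dots> = sminus (B i i * perm_cofactor n B k i)"
    unfolding F_def by (rule sum_dup_row_terms_fixing_row[OF i])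
  finally show ?thesis .
qed

section \<open>Uniqueness of signed solutions\<close>

lemma finite_ex_max_on:
  fixes f :: "'b \<Rightarrow> 'a::linorder"
  assumes "finite S" "S \<noteq> {}"
  obtains i where "i \<in> S" "\<forall>j\<in>S. f j \<le> f i"
proof -
  have "Max (f ` S) \<in> f ` S" using assms by simp
  then obtain i where "i \<in> S" "f i = Max (f ` S)" by (metis imageE)
  then show thesis using that assms by simp
qed

text \<open>Both steps of the uniqueness argument pick an index maximising the potential
  2 |z_i| + |b_ii| and follow an edge i \<rightarrow> l carrying a large term b_il z_l of row i;
  dominance |b_il|^2 < |b_ii| |b_ll| then makes the potential of l strictly larger.\<close>

lemma potential_increase:
  fixes a b e mi ml :: "'a::linordered_ab_group_add"
  assumes "mi + a \<le> e + b" and "e + e < mi + ml"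
  shows "a + a + mi < b + b + ml"
proof -
  have "(mi + a) + (mi + a) \<le> (e + b) + (e + b)" using add_mono[OF assms(1) assms(1)] .
  also have "\<dots> = (e + e) + (b + b)" by (simp add: ac_simps)
  also have "\<dots> < (mi + ml) + (b + b)" using assms(2) by (rule add_strict_right_mono)
  finally have "mi + (a + a + mi) < mi + (b + b + ml)" by (simp add: ac_simps)
  then show ?thesis by simp
qed

context
  fixes B :: "nat \<Rightarrow> nat \<Rightarrow> 'a::linordered_ab_group_add smax" and n k :: nat
    and x y :: "nat \<Rightarrow> 'a smax"
  assumes dom: "diag_dominant {..<n} B"
    and diag_signed: "\<forall>i<n. i \<noteq> k \<longrightarrow> signed (B i i)"
    and x_signed: "\<forall>i<n. signed (x i)" and y_signed: "\<forall>i<n. signed (y i)"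
    and x_solves: "\<forall>i<n. balanced (\<Sum>l<n. B i l * x l)"
    and y_rows: "\<forall>i<n. i \<noteq> k \<longrightarrow> (\<Sum>l\<in>{..<n} - {i}. B i l * y l) = sminus (B i i * y i)"
    and agree: "x k = y k"
begin

lemma sum_row_split: "i < n \<Longrightarrow> (\<Sum>l<n. B i l * z l) = B i i * z i + (\<Sum>l\<in>{..<n} - {i}. B i l * z l)"
  by (rule sum.remove) auto

lemma adj_solution_row_bound:
  assumes "i < n" "i \<noteq> k" "l < n" "l \<noteq> i" "B i l \<noteq> 0" "y l \<noteq> 0"
  shows "y i \<noteq> 0 \<and> smod (B i l) + smod (y l) \<le> smod (B i i) + smod (y i)"
proof -
  have "smod (B i l * y l) \<le> smod (\<Sum>l\<in>{..<n} - {i}. B i l * y l)"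
    and "(\<Sum>l\<in>{..<n} - {i}. B i l * y l) \<noteq> 0"
    using smod_term_le_smod_sum[of "{..<n} - {i}" l "\<lambda>l. B i l * y l"] assms by auto
  then have "smod (B i l * y l) \<le> smod (B i i * y i)" "y i \<noteq> 0"
    using y_rows assms(1,2) by auto
  then show ?thesis
    using assms diag_dominant_diag_nonzero[OF dom] by (simp add: smod_mult)
qed

lemma signed_solution_smod_le:
  assumes "i < n" "x i \<noteq> 0"
  shows "y i \<noteq> 0 \<and> smod (x i) \<le> smod (y i)"
proof (rule ccontr)
  define Bad where "Bad = {i. i < n \<and> x i \<noteq> 0 \<and> (y i = 0 \<or> smod (y i) < smod (x i))}"
  assume "\<not> ?thesis"
  then have ne: "Bad \<noteq> {}" using assms unfolding Bad_def by (auto simp: not_le)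
  have fin: "finite Bad" unfolding Bad_def by simp
  obtain i where "i \<in> Bad"
    and imax: "\<forall>j\<in>Bad. smod (x j) + smod (x j) + smod (B j j) \<le> smod (x i) + smod (x i) + smod (B i i)"
    by (rule finite_ex_max_on[OF fin ne])
  then have i: "i < n" "x i \<noteq> 0" "y i = 0 \<or> smod (y i) < smod (x i)" by (auto simp: Bad_def)
  then have "i \<noteq> k" using agree by auto
  have Bii: "B i i \<noteq> 0" using dom i(1) by (simp add: diag_dominant_diag_nonzero)
  have "balanced (\<Sum>l<n. B i l * x l)" using x_solves i(1) by blast
  then have bal: "balanced (B i i * x i + (\<Sum>l\<in>{..<n} - {i}. B i l * x l))"
    unfolding sum_row_split[OF i(1)] .
  have "signed (B i i * x i)" using x_signed diag_signed i(1) \<open>i \<noteq> k\<close> by (simp add: signed_mult)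
  moreover have "B i i * x i \<noteq> 0" using Bii i(2) by simp
  ultimately have "\<exists>l\<in>{..<n} - {i}. B i l * x l \<noteq> 0 \<and> smod (B i i * x i) \<le> smod (B i l * x l)"
    by (intro balanced_add_sum_large_term[OF _ _ _ bal]) simp_all
  then obtain l where l: "l \<in> {..<n} - {i}" "B i l * x l \<noteq> 0" "smod (B i i * x i) \<le> smod (B i l * x l)"
    by blast
  then have ln: "l < n" "l \<noteq> i" and Bil: "B i l \<noteq> 0" "x l \<noteq> 0" by auto
  have edge: "smod (B i i) + smod (x i) \<le> smod (B i l) + smod (x l)"
    using l(3) Bii i(2) Bil by (simp add: smod_mult)
  have "l \<in> Bad"
  proof (cases "y l = 0")
    case False
    then have "y i \<noteq> 0" "smod (B i l) + smod (y l) \<le> smod (B i i) + smod (y i)"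
      using adj_solution_row_bound[OF i(1) \<open>i \<noteq> k\<close> ln Bil(1)] by auto
    then have "smod (B i l) + smod (y l) < smod (B i l) + smod (x l)"
      using i(3) edge by (meson add_strict_left_mono le_less_trans less_le_trans)
    then show ?thesis using ln Bil unfolding Bad_def by auto
  qed (use ln Bil in \<open>auto simp: Bad_def\<close>)
  moreover have "smod (x i) + smod (x i) + smod (B i i) < smod (x l) + smod (x l) + smod (B l l)"
    using potential_increase[OF edge] diag_dominantD[OF dom _ _ ln(2)[symmetric] Bil(1)] i(1) ln(1)
    by simp
  ultimately show False using imax by (meson not_le)
qed

lemma signed_solution_eq_if_tight_terms_agree:
  assumes i: "i < n" "i \<noteq> k" "y i \<noteq> 0"
    and tight: "\<And>l. l < n \<Longrightarrow> l \<noteq> i \<Longrightarrow> B i l \<noteq> 0 \<Longrightarrow> y l \<noteq> 0 \<Longrightarrow>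
      smod (B i l) + smod (y l) = smod (B i i) + smod (y i) \<Longrightarrow> x l = y l"
  shows "x i = y i"
proof -
  let ?L = "{..<n} - {i}"
  let ?s = "sminus (B i i * y i)"
  have Bii: "B i i \<noteq> 0" using dom i(1) by (simp add: diag_dominant_diag_nonzero)
  have s: "signed ?s" "?s \<noteq> 0" "smod ?s = smod (B i i) + smod (y i)"
    using diag_signed y_signed i Bii by (simp_all add: signed_mult smod_mult)
  have y_row: "(\<Sum>l\<in>?L. B i l * y l) = ?s" using y_rows i by simp
  obtain l0 where l0: "l0 \<in> ?L" "B i l0 * y l0 \<noteq> 0" "smod (B i l0 * y l0) = smod ?s"
    using smod_sum_attained[of ?L "\<lambda>l. B i l * y l"] y_row s(2) by auto
  then have "x l0 = y l0" using tight[of l0] s(3) by (auto simp: smod_mult)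
  have x_row: "(\<Sum>l\<in>?L. B i l * x l) = ?s"
  proof (rule sum_eq_if_dominant_term_kept[OF _ s(1,2) y_row _ l0(1) _ l0(2,3)])
    fix l assume l: "l \<in> ?L"
    show "B i l * x l = B i l * y l \<or> smod_less (B i l * x l) ?s"
    proof (cases "x l = y l \<or> B i l = 0 \<or> x l = 0")
      case False
      then have ln: "l < n" "l \<noteq> i" and nz: "x l \<noteq> y l" "B i l \<noteq> 0" "x l \<noteq> 0" using l by auto
      then have yl: "y l \<noteq> 0" "smod (x l) \<le> smod (y l)" using signed_solution_smod_le by auto
      have "smod (B i l) + smod (y l) \<le> smod (B i i) + smod (y i)"
        using adj_solution_row_bound[OF i(1,2) ln nz(2) yl(1)] by simp
      moreover have "smod (B i l) + smod (y l) \<noteq> smod (B i i) + smod (y i)"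
        using tight[OF ln nz(2) yl(1)] nz(1) by auto
      ultimately have "smod (B i l) + smod (x l) < smod (B i i) + smod (y i)"
        using yl(2) by (meson add_left_mono le_less_trans order_le_neq_trans)
      then show ?thesis using nz s(2,3) by (simp add: smod_less_def smod_mult)
    qed (auto simp: smod_less_def)
  qed (use \<open>x l0 = y l0\<close> in simp_all)
  have "balanced (\<Sum>l<n. B i l * x l)" using x_solves i(1) by blast
  then have "balanced (B i i * x i + sminus (B i i * y i))"
    unfolding sum_row_split[OF i(1)] x_row .
  then have "B i i * x i = B i i * y i"
    by (rule signed_eq_if_balanced_diff[rotated 2])
      (use x_signed y_signed diag_signed i in \<open>simp_all add: signed_mult\<close>)
  then show "x i = y i"
    using signed_mult_left_cancel diag_signed i Bii by blast
qed

lemma signed_solution_eq: "\<forall>i<n. x i = y i"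
proof (rule ccontr)
  define D where "D = {i. i < n \<and> x i \<noteq> y i}"
  assume "\<not> ?thesis"
  then have ne: "D \<noteq> {}" unfolding D_def by auto
  have fin: "finite D" unfolding D_def by simp
  obtain i where "i \<in> D"
    and imax: "\<forall>j\<in>D. smod (y j) + smod (y j) + smod (B j j) \<le> smod (y i) + smod (y i) + smod (B i i)"
    by (rule finite_ex_max_on[OF fin ne])
  then have i: "i < n" "x i \<noteq> y i" by (auto simp: D_def)
  then have "i \<noteq> k" using agree by auto
  have "y i \<noteq> 0" using signed_solution_smod_le[OF i(1)] i(2) by auto
  have "x l = y l" if "l < n" "l \<noteq> i" "B i l \<noteq> 0" "y l \<noteq> 0"
    "smod (B i l) + smod (y l) = smod (B i i) + smod (y i)" for l
  proof (rule ccontr)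
    assume "x l \<noteq> y l"
    have "smod (y i) + smod (y i) + smod (B i i) < smod (y l) + smod (y l) + smod (B l l)"
      using potential_increase[of "smod (B i i)" "smod (y i)" "smod (B i l)" "smod (y l)"]
        diag_dominantD[OF dom _ _ _ that(3)] that(1,2,5) i(1) by auto
    moreover have "l \<in> D" using that(1) \<open>x l \<noteq> y l\<close> by (simp add: D_def)
    ultimately show False using imax by (meson not_le)
  qed
  then have "x i = y i"
    by (rule signed_solution_eq_if_tight_terms_agree[OF i(1) \<open>i \<noteq> k\<close> \<open>y i \<noteq> 0\<close>])
  then show False using i(2) by simp
qed

end

section \<open>Tropical positive definite matrices\<close>

lemma sless_0_iff: "sless 0 x \<longleftrightarrow> spositive (x::'a::linordered_ab_group_add smax)"
  by (simp add: sless_def ssub_def)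

lemma tpd_diag:
  assumes "TPD n A" "r < n"
  shows "A r r = SPos (smod (A r r))"
proof -
  have "sless 0 (A r r)" using assms unfolding TPD_def by blast
  then show ?thesis by (auto simp: sless_0_iff spositive_def)
qed

lemma sless_SPos_iff: "sless (SPos a) (SPos b) \<longleftrightarrow> a < (b::'a::linordered_ab_group_add)"
  by (auto simp: sless_def ssub_def spositive_def)

lemma tpd_offdiag:
  fixes A :: "nat \<Rightarrow> nat \<Rightarrow> 'a::linordered_ab_group_add smax"
  assumes tpd: "TPD n A" and "r < n" "c < n" "r \<noteq> c" "A r c \<noteq> 0"
  shows "smod (A r c) + smod (A r c) < smod (A r r) + smod (A c c)"
proof -
  have "signed (A r c)" and less: "sless (A r c * A r c) (A r r * A c c)"
    using assms unfolding TPD_def by blast+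
  then have "A r c * A r c = SPos (smod (A r c) + smod (A r c))"
    using \<open>A r c \<noteq> 0\<close> by (cases "A r c") (auto simp: signed_def zero_smax_def)
  moreover obtain a b where "A r r = SPos a" "A c c = SPos b"
    using tpd_diag[OF tpd \<open>r < n\<close>] tpd_diag[OF tpd \<open>c < n\<close>] by blast
  then have "A r r * A c c = SPos (smod (A r r) + smod (A c c))" by simp
  ultimately show ?thesis
    using less by (simp add: sless_SPos_iff)
qed

text \<open>Subtracting any x from the positive diagonal of A can only raise its modulus,
  so x I \<ominus> A inherits the dominance of A.\<close>

lemma tpd_char_matrix_diag_dominant:
  fixes A :: "nat \<Rightarrow> nat \<Rightarrow> 'a::linordered_ab_group_add smax"
  assumes tpd: "TPD n A"
  shows "diag_dominant {..<n} (\<lambda>r s. ssub (if r = s then x else 0) (A r s))"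
proof -
  let ?M = "\<lambda>r s. ssub (if r = s then x else 0) (A r s)"
  have diag: "?M r r \<noteq> 0 \<and> smod (A r r) \<le> smod (?M r r)" if r: "r < n" for r
  proof -
    obtain d where "A r r = SPos d" using tpd_diag[OF tpd r] by blast
    then show ?thesis by (cases x) (auto simp: ssub_def zero_smax_def)
  qed
  show ?thesis
    unfolding diag_dominant_def
  proof (intro conjI ballI impI)
    show "?M r r \<noteq> 0" if "r \<in> {..<n}" for r using diag that by simp
  next
    fix r c assume rc: "r \<in> {..<n}" "c \<in> {..<n}" "r \<noteq> c"
    show "?M r c = 0 \<or> smod (?M r c) + smod (?M r c) < smod (?M r r) + smod (?M c c)"
    proof (cases "A r c = 0")
      case False
      then have "smod (A r c) + smod (A r c) < smod (A r r) + smod (A c c)"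
        using tpd_offdiag[OF tpd] rc by simp
      also have "\<dots> \<le> smod (?M r r) + smod (?M c c)"
        using diag rc by (simp add: add_mono)
      finally show ?thesis using rc by (simp add: ssub_def)
    qed (use rc in \<open>simp add: ssub_def\<close>)
  qed
qed

lemma scharpoly_tpd:
  assumes "TPD n A"
  shows "scharpoly n A x = (\<Prod>i<n. ssub x (A i i))"
  unfolding scharpoly_def by (simp add: sdet_diag_dominant[OF tpd_char_matrix_diag_dominant[OF assms]])

lemma simple_alg_eigenvalue_tpd:
  assumes tpd: "TPD n A" and k: "k < n" and simple: "\<forall>i<n. i \<noteq> k \<longrightarrow> A i i \<noteq> A k k"
  shows "simple_alg_eigenvalue n A (A k k)"
  unfolding simple_alg_eigenvalue_def
proof (intro exI[of _ "\<lambda>i. A i i"] conjI)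
  show "\<forall>i<n. signed (A i i)" using tpd unfolding TPD_def by blast
  show "\<forall>x. signed x \<longrightarrow> scharpoly n A x = (\<Prod>i<n. ssub x (A i i))"
    using scharpoly_tpd[OF tpd] by blast
  have "{i. i < n \<and> A i i = A k k} = {k}" using simple k by auto
  then show "card {i. i < n \<and> A i i = A k k} = 1" by simp
qed

lemma seigvec_balanced_rows:
  fixes A :: "nat \<Rightarrow> nat \<Rightarrow> 'a::linordered_ab_group_add smax"
  assumes "seigvec n A \<gamma> v" "i < n"
  shows "balanced (\<Sum>l<n. ssub (if i = l then \<gamma> else 0) (A i l) * v l)"
proof -
  have "(\<Sum>l<n. ssub (if i = l then \<gamma> else 0) (A i l) * v l)
      = (\<Sum>l<n. if l = i then \<gamma> * v l else 0) + (\<Sum>l<n. sminus (A i l * v l))"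
    unfolding sum.distrib[symmetric] by (rule sum.cong) (auto simp: ssub_def distrib_right sminus_mult_left)
  also have "\<dots> = sminus (ssub (smat_vec n A v i) (\<gamma> * v i))"
    using assms(2) by (simp add: ssub_def smat_vec_def sminus_sum sminus_add add.commute)
  finally show ?thesis
    using assms unfolding seigvec_def sbal_def by simp
qed

section \<open>Eigenvectors are multiples of the adjugate column\<close>

lemma signed_solution_multiple_of_adj_column:
  fixes B :: "nat \<Rightarrow> nat \<Rightarrow> 'a::linordered_ab_group_add smax" and x :: "nat \<Rightarrow> 'a smax"
  assumes dom: "diag_dominant {..<n} B" and k: "k < n"
    and diag_signed: "\<forall>i<n. i \<noteq> k \<longrightarrow> signed (B i i)"
    and col_signed: "\<forall>i<n. signed (sadj n B i k)"
    and x_signed: "\<forall>i<n. signed (x i)"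
    and x_solves: "\<forall>i<n. balanced (\<Sum>l<n. B i l * x l)"
  shows "\<exists>c. \<forall>i<n. x i = c * sadj n B i k"
proof -
  define u where "u l = sadj n B l k" for l
  obtain m where n: "n = Suc m" using k by (cases n) auto
  have u_cofactor: "u l = perm_cofactor n B k l" if "l < n" for l
    unfolding u_def n using k that n by (simp add: sadj_eq_perm_cofactor)
  have "signed (u k)" "u k \<noteq> 0"
    using col_signed k sadj_diag_dominant_diag_nonzero[OF dom k] by (simp_all add: u_def)
  then obtain v where v: "signed v" "v * u k = 1" by (rule signed_invertible)
  define c where "c = x k * v"
  have "\<forall>i<n. x i = c * u i"
  proof (rule signed_solution_eq[OF dom diag_signed x_signed _ x_solves])
    show "\<forall>i<n. signed (c * u i)"
      using col_signed x_signed v(1) k by (simp add: c_def u_def signed_mult)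
    show "x k = c * u k" using v(2) by (simp add: c_def mult.assoc)
    show "\<forall>i<n. i \<noteq> k \<longrightarrow> (\<Sum>l\<in>{..<n} - {i}. B i l * (c * u l)) = sminus (B i i * (c * u i))"
    proof (intro allI impI)
      fix i assume i: "i < n" "i \<noteq> k"
      have "(\<Sum>l\<in>{..<n} - {i}. B i l * (c * u l)) = c * (\<Sum>l\<in>{..<n} - {i}. B i l * perm_cofactor n B k l)"
        by (simp add: sum_distrib_left mult.left_commute u_cofactor)
      also have "\<dots> = c * sminus (B i i * u i)"
        using perm_cofactor_row_identity[OF dom i(1) k i(2)] u_cofactor[OF i(1)] by simp
      finally show "(\<Sum>l\<in>{..<n} - {i}. B i l * (c * u l)) = sminus (B i i * (c * u i))"
        by (simp add: sminus_mult_right[symmetric] mult.left_commute)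
    qed
  qed
  then show ?thesis unfolding u_def by blast
qed

lemma ssub_self_not_signed: "a \<noteq> 0 \<Longrightarrow> \<not> signed (ssub a (a::'a::linordered_ab_group_add smax))"
  by (cases a) (auto simp: ssub_def signed_def zero_smax_def)

theorem corollary5p4:
  fixes A :: "nat \<Rightarrow> nat \<Rightarrow> 'a::linordered_ab_group_add smax"
    and n k j :: nat
  assumes divisible: "\<forall>(x::'a) (m::nat). 0 < m \<longrightarrow> (\<exists>y. (\<Sum>i<m. y) = x)"
    and tpd: "TPD n A"
    and ordered: "\<forall>i j. i \<le> j \<and> j < n \<longrightarrow> sle (A j j) (A i i)"
    and k: "k < n"
    and j: "j < n"
    and col_signed: "\<forall>i<n. signed (sadj n (\<lambda>r s. ssub (if r = s then A k k else 0) (A r s)) i j)"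
    and col_nonzero: "\<exists>i<n. sadj n (\<lambda>r s. ssub (if r = s then A k k else 0) (A r s)) i j \<noteq> 0"
  shows "j = k \<and>
         (\<forall>v. seigvec n A (A k k) v \<longrightarrow>
              (\<exists>c. \<forall>i<n. v i = c * sadj n (\<lambda>r s. ssub (if r = s then A k k else 0) (A r s)) i j)) \<and>
         simple_alg_eigenvalue n A (A k k)"
proof -
  define B where "B = (\<lambda>r s. ssub (if r = s then A k k else 0) (A r s))"
  have dom: "diag_dominant {..<n} B"
    unfolding B_def by (rule tpd_char_matrix_diag_dominant[OF tpd])
  have "A k k \<noteq> 0" using tpd_diag[OF tpd k] by (metis smax.distinct(1) zero_smax_def)
  then have Bkk: "\<not> signed (B k k)"
    using ssub_self_not_signed by (simp add: B_def)
  have jk: "j = k"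
    using signed_sadj_diag_imp_signed_diag[OF dom j _ k] col_signed j Bkk by (auto simp: B_def)
  have diag_signed: "\<forall>i<n. i \<noteq> k \<longrightarrow> signed (B i i)"
    using signed_sadj_diag_imp_signed_diag[OF dom k] col_signed k jk by (auto simp: B_def)
  then have simple: "\<forall>i<n. i \<noteq> k \<longrightarrow> A i i \<noteq> A k k"
    using Bkk by (auto simp: B_def)
  have "\<exists>c. \<forall>i<n. v i = c * sadj n B i k" if "seigvec n A (A k k) v" for v
    using signed_solution_multiple_of_adj_column[OF dom k diag_signed] col_signed jk that
      seigvec_balanced_rows[OF that]
    unfolding seigvec_def B_def by auto
  then show ?thesis
    using jk simple_alg_eigenvalue_tpd[OF tpd k simple] unfolding B_def by blast
qed

end
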